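(* Let $T:\mathcal{M}_d\to\mathcal{M}_d$ be a doubly stochastic quantum channel, $X\in\mathcal{M}_d$ positive definite and $q\geq2$. Then $$\|T(X)\|_{q,\frac{\mathbb{1}_d}{d}}^q-\|X\|_{q,\frac{\mathbb{1}_d}{d}}^q\leq-\mathcal{E}^2_{T^*T-\text{id}}(X^{q/2}).$$
   Context: Doubly stochastic channel: completely positive, trace preserving, $T(\mathbb{1})=T^*(\mathbb{1})=\mathbb{1}$ ($T^*$ the Hilbert–Schmidt adjoint). Weighted norm: $\|Y\|_{p,\frac{\mathbb{1}_d}{d}}=d^{-1/p}(\text{tr}|Y|^p)^{1/p}$. Dirichlet form: $\mathcal{E}^2_{\mathcal{L}}(Y)=-\frac1d\text{tr}[\mathcal{L}(Y)Y]$. *)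

theory Defs
  imports "Jordan_Normal_Form.Schur_Decomposition"
begin

text \<open>Matrices in M_d are complex d x d matrices (Jordan_Normal_Form mat with carrier_mat d d).\<close>

definition mtrace :: "complex mat \<Rightarrow> complex" where
  "mtrace A = (\<Sum>i<dim_row A. A $$ (i, i))"

definition hermitian_mat :: "nat \<Rightarrow> complex mat \<Rightarrow> bool" where
  "hermitian_mat d A \<longleftrightarrow> A \<in> carrier_mat d d \<and> mat_adjoint A = A"

definition psd_mat :: "nat \<Rightarrow> complex mat \<Rightarrow> bool" where
  "psd_mat d A \<longleftrightarrow> hermitian_mat d A \<and>
     (\<forall>v \<in> carrier_vec d. 0 \<le> Re ((A *\<^sub>v v) \<bullet>c v))"

definition pd_mat :: "nat \<Rightarrow> complex mat \<Rightarrow> bool" where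
  "pd_mat d A \<longleftrightarrow> hermitian_mat d A \<and>
     (\<forall>v \<in> carrier_vec d. v \<noteq> 0\<^sub>v d \<longrightarrow> 0 < Re ((A *\<^sub>v v) \<bullet>c v))"

definition unitary_mat :: "nat \<Rightarrow> complex mat \<Rightarrow> bool" where
  "unitary_mat d U \<longleftrightarrow> U \<in> carrier_mat d d \<and> U * mat_adjoint U = 1\<^sub>m d \<and> mat_adjoint U * U = 1\<^sub>m d"

definition mat_fun :: "nat \<Rightarrow> (real \<Rightarrow> real) \<Rightarrow> complex mat \<Rightarrow> complex mat" where
  "mat_fun d f A = (SOME B. \<exists>U s. unitary_mat d U \<and>
      A = U * mat_diag d (\<lambda>i. complex_of_real (s i)) * mat_adjoint U \<and>
      B = U * mat_diag d (\<lambda>i. complex_of_real (f (s i))) * mat_adjoint U)"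

definition mat_abs :: "nat \<Rightarrow> complex mat \<Rightarrow> complex mat" where
  "mat_abs d Y = mat_fun d sqrt (mat_adjoint Y * Y)"

definition mat_rpow :: "nat \<Rightarrow> complex mat \<Rightarrow> real \<Rightarrow> complex mat" where
  "mat_rpow d A p = mat_fun d (\<lambda>x. x powr p) A"

definition wnorm :: "nat \<Rightarrow> real \<Rightarrow> complex mat \<Rightarrow> real" where
  "wnorm d p Y = real d powr (- 1 / p) * (Re (mtrace (mat_rpow d (mat_abs d Y) p))) powr (1 / p)"

text \<open>Dirichlet form  E_L(Y) = -(1/d) tr[L(Y) Y]  (a real number in the situation considered).\<close>
definition dirichlet :: "nat \<Rightarrow> (complex mat \<Rightarrow> complex mat) \<Rightarrow> complex mat \<Rightarrow> real" where
  "dirichlet d L Y = - (1 / real d) * Re (mtrace (L Y * Y))"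

definition linear_map_mat :: "nat \<Rightarrow> (complex mat \<Rightarrow> complex mat) \<Rightarrow> bool" where
  "linear_map_mat d T \<longleftrightarrow>
     (\<forall>A \<in> carrier_mat d d. T A \<in> carrier_mat d d) \<and>
     (\<forall>A \<in> carrier_mat d d. \<forall>B \<in> carrier_mat d d. T (A + B) = T A + T B) \<and>
     (\<forall>A \<in> carrier_mat d d. \<forall>c. T (c \<cdot>\<^sub>m A) = c \<cdot>\<^sub>m T A)"

text \<open>(id_k \<otimes> T) applied to a (k d) x (k d) matrix: T acts on each d x d block.\<close>
definition ampliate :: "nat \<Rightarrow> nat \<Rightarrow> (complex mat \<Rightarrow> complex mat) \<Rightarrow> complex mat \<Rightarrow> complex mat" where
  "ampliate k d T M = Matrix.mat (k * d) (k * d) (\<lambda>(i, j).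
      T (Matrix.mat d d (\<lambda>(a, b). M $$ ((i div d) * d + a, (j div d) * d + b))) $$ (i mod d, j mod d))"

definition completely_positive :: "nat \<Rightarrow> (complex mat \<Rightarrow> complex mat) \<Rightarrow> bool" where
  "completely_positive d T \<longleftrightarrow>
     (\<forall>k. \<forall>M. psd_mat (k * d) M \<longrightarrow> psd_mat (k * d) (ampliate k d T M))"

definition trace_preserving :: "nat \<Rightarrow> (complex mat \<Rightarrow> complex mat) \<Rightarrow> bool" where
  "trace_preserving d T \<longleftrightarrow> (\<forall>A \<in> carrier_mat d d. mtrace (T A) = mtrace A)"

definition hs_adjoint :: "nat \<Rightarrow> (complex mat \<Rightarrow> complex mat) \<Rightarrow> complex mat \<Rightarrow> complex mat" where
  "hs_adjoint d T A = (SOME C. C \<in> carrier_mat d d \<and>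
      (\<forall>B \<in> carrier_mat d d. mtrace (mat_adjoint C * B) = mtrace (mat_adjoint A * T B)))"

definition doubly_stochastic_channel :: "nat \<Rightarrow> (complex mat \<Rightarrow> complex mat) \<Rightarrow> bool" where
  "doubly_stochastic_channel d T \<longleftrightarrow>
     linear_map_mat d T \<and> completely_positive d T \<and> trace_preserving d T \<and>
     T (1\<^sub>m d) = 1\<^sub>m d \<and> hs_adjoint d T (1\<^sub>m d) = 1\<^sub>m d"

end

theory Submission
  imports Defs "HOL-Analysis.Convex"
begin

text \<open>Diagonalise $X = \sum_i \lambda_i P_i$ and $T(X) = \sum_j \mu_j\, w_j w_j^*$. The weights
  $s_{ij} = \langle w_j, T(P_i)\, w_j\rangle$ are nonnegative because $T$ is positive, their columns
  sum to $1$ because $T$ is unital, and $\mu_j = \sum_i s_{ij} \lambda_i$. For $p = q/2 \ge 1$ Jensen's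
  inequality gives $\mu_j^p \le \sum_i s_{ij} \lambda_i^p = \langle w_j, T(X^p)\, w_j\rangle$, hence
  $\sum_j \mu_j^q \le \sum_j \langle w_j, T(X^p)\, w_j\rangle^2 \le \|T(X^p)\|_2^2
  = \mathrm{tr}(X^p\, T^*T(X^p))$. Subtracting $\mathrm{tr}\, X^q = \|X^p\|_2^2$ and dividing by $d$
  gives the claim.\<close>

section \<open>Adjoints and unitary matrices\<close>

lemma mat_adjoint_dim [simp]:
  "dim_row (mat_adjoint A) = dim_col A" "dim_col (mat_adjoint A) = dim_row A"
  by (simp_all add: mat_adjoint_def mat_of_rows_def)

lemma index_mat_adjoint [simp]:
  "i < dim_col A \<Longrightarrow> j < dim_row A \<Longrightarrow> mat_adjoint A $$ (i, j) = cnj (A $$ (j, i))"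
  by (simp add: mat_adjoint_def mat_of_rows_def cols_def)

lemma mat_adjoint_carrier [simp]: "A \<in> carrier_mat n m \<Longrightarrow> mat_adjoint A \<in> carrier_mat m n"
  by (metis mat_adjoint_dim carrier_matD carrier_matI)

lemma mat_adjoint_adjoint [simp]: "mat_adjoint (mat_adjoint A) = (A :: complex mat)"
  by (rule eq_matI) simp_all

lemma mat_adjoint_mult:
  assumes "A \<in> carrier_mat n k" "B \<in> carrier_mat k m"
  shows "mat_adjoint (A * B) = mat_adjoint B * mat_adjoint (A :: complex mat)"
  using assms by (intro eq_matI) (simp_all add: scalar_prod_def cnj_sum mult.commute)

lemma mat_adjoint_one [simp]: "mat_adjoint (1\<^sub>m n :: complex mat) = 1\<^sub>m n"
  by (rule eq_matI) simp_all

lemma mat_adjoint_zero [simp]: "mat_adjoint (0\<^sub>m n m :: complex mat) = 0\<^sub>m m n"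
  by (rule eq_matI) simp_all

lemma mat_adjoint_four_block:
  assumes "A \<in> carrier_mat n1 n1" "B \<in> carrier_mat n1 n2"
    "C \<in> carrier_mat n2 n1" "D \<in> carrier_mat n2 n2"
  shows "mat_adjoint (four_block_mat A B C D)
    = four_block_mat (mat_adjoint A) (mat_adjoint C) (mat_adjoint B) (mat_adjoint (D :: complex mat))"
  using assms by (intro eq_matI) (auto simp: index_mat_four_block)

lemma mult_carrier_mat_square [simp]:
  "A \<in> carrier_mat n n \<Longrightarrow> B \<in> carrier_mat n n \<Longrightarrow> A * B \<in> carrier_mat n n"
  by (rule mult_carrier_mat)

lemma dim_mat_diag [simp]: "dim_row (mat_diag n f) = n" "dim_col (mat_diag n f) = n"
  by (simp_all add: mat_diag_def)

abbreviation rdiag :: "nat \<Rightarrow> (nat \<Rightarrow> real) \<Rightarrow> complex mat" where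
  "rdiag n s \<equiv> mat_diag n (\<lambda>i. complex_of_real (s i))"

lemma mat_adjoint_rdiag [simp]: "mat_adjoint (rdiag n s) = rdiag n s"
  by (rule eq_matI) (auto simp: mat_diag_def)

lemma mat_adjoint_conj:
  assumes "(U :: complex mat) \<in> carrier_mat n n" "M \<in> carrier_mat n n"
  shows "mat_adjoint (U * M * mat_adjoint U) = U * mat_adjoint M * mat_adjoint U"
  using assms
  by (simp only: mat_adjoint_mult[OF mult_carrier_mat[OF assms] mat_adjoint_carrier[OF assms(1)]]
      mat_adjoint_mult[OF assms] mat_adjoint_adjoint) (simp add: assoc_mult_mat[of _ n n _ n _ n])

lemma cscalar_prod_self_pos:
  assumes "w \<in> carrier_vec n" "w \<noteq> 0\<^sub>v n"
  shows "w \<bullet>c w = complex_of_real (Re (w \<bullet>c w))" "0 < Re (w \<bullet>c w)"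
proof -
  have "w \<bullet>c w > 0" using assms conjugate_square_greater_0_vec by blast
  then show "w \<bullet>c w = complex_of_real (Re (w \<bullet>c w))" "0 < Re (w \<bullet>c w)"
    by (simp_all add: less_complex_def complex_eq_iff)
qed

definition vec_normalize :: "complex vec \<Rightarrow> complex vec" where
  "vec_normalize w = complex_of_real (1 / sqrt (Re (w \<bullet>c w))) \<cdot>\<^sub>v w"

lemma vec_normalize_carrier [simp]: "w \<in> carrier_vec n \<Longrightarrow> vec_normalize w \<in> carrier_vec n"
  unfolding vec_normalize_def by simp

lemma cscalar_prod_vec_normalize:
  assumes "w \<in> carrier_vec n" "u \<in> carrier_vec n"
  shows "vec_normalize w \<bullet>c vec_normalize u
    = complex_of_real (1 / sqrt (Re (w \<bullet>c w)) * (1 / sqrt (Re (u \<bullet>c u)))) * (w \<bullet>c u)"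
  using assms unfolding vec_normalize_def by (simp add: conjugate_smult_vec mult.assoc)

lemma vec_normalize_unit:
  assumes w: "w \<in> carrier_vec n" "w \<noteq> 0\<^sub>v n"
  shows "vec_normalize w \<bullet>c vec_normalize w = 1"
proof -
  define r where "r = Re (w \<bullet>c w)"
  have "w \<bullet>c w = complex_of_real r" "0 < r" using cscalar_prod_self_pos[OF w] by (simp_all add: r_def)
  then show ?thesis
    unfolding cscalar_prod_vec_normalize[OF w(1) w(1)] r_def[symmetric]
    by (simp flip: of_real_mult)
qed

lemma vec_normalize_id: "w \<bullet>c w = 1 \<Longrightarrow> vec_normalize w = w"
  unfolding vec_normalize_def by simp

lemma unitary_matD:
  assumes "unitary_mat n U"
  shows "U \<in> carrier_mat n n" "mat_adjoint U * U = 1\<^sub>m n" "U * mat_adjoint U = 1\<^sub>m n"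
  using assms unfolding unitary_mat_def by auto

lemma unitary_mat_cancel:
  assumes "unitary_mat n U" "dim_row X = n"
  shows "mat_adjoint U * (U * X) = X" "U * (mat_adjoint U * X) = X"
proof -
  have U: "U \<in> carrier_mat n n" using unitary_matD[OF assms(1)] by auto
  have X: "X \<in> carrier_mat n (dim_col X)" using assms(2) by (intro carrier_matI) auto
  have "mat_adjoint U * (U * X) = (mat_adjoint U * U) * X"
    by (rule assoc_mult_mat[symmetric, OF mat_adjoint_carrier[OF U] U X])
  then show "mat_adjoint U * (U * X) = X" using unitary_matD(2)[OF assms(1)] X by simp
  have "U * (mat_adjoint U * X) = (U * mat_adjoint U) * X"
    by (rule assoc_mult_mat[symmetric, OF U mat_adjoint_carrier[OF U] X])
  then show "U * (mat_adjoint U * X) = X" using unitary_matD(3)[OF assms(1)] X by simp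
qed

lemma unitary_mat_conj_cancel:
  assumes U: "unitary_mat n U" and M: "M \<in> carrier_mat n n"
  shows "mat_adjoint U * (U * M * mat_adjoint U) * U = M"
    and "U * (mat_adjoint U * M * U) * mat_adjoint U = M"
proof -
  note Uc = unitary_matD(1)[OF U]
  have "mat_adjoint U * (U * M * mat_adjoint U) * U = mat_adjoint U * (U * (M * (mat_adjoint U * U)))"
    using Uc M by (simp add: assoc_mult_mat[of _ n n _ n _ n])
  then show "mat_adjoint U * (U * M * mat_adjoint U) * U = M"
    using unitary_matD(2)[OF U] M by (simp add: unitary_mat_cancel[OF U])
  have "U * (mat_adjoint U * M * U) * mat_adjoint U = U * (mat_adjoint U * (M * (U * mat_adjoint U)))"
    using Uc M by (simp add: assoc_mult_mat[of _ n n _ n _ n])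
  then show "U * (mat_adjoint U * M * U) * mat_adjoint U = M"
    using unitary_matD(3)[OF U] M by (simp add: unitary_mat_cancel[OF U])
qed

lemma unitary_mat_mult:
  assumes U: "unitary_mat n U" and V: "unitary_mat n V"
  shows "unitary_mat n (U * V)"
proof -
  note Uc = unitary_matD(1)[OF U] and Vc = unitary_matD(1)[OF V]
  have "mat_adjoint (U * V) * (U * V) = mat_adjoint V * (mat_adjoint U * (U * V))"
    using Uc Vc by (simp add: mat_adjoint_mult[OF Uc Vc] assoc_mult_mat[of _ n n _ n _ n])
  moreover have "(U * V) * mat_adjoint (U * V) = U * (V * (mat_adjoint V * mat_adjoint U))"
    using Uc Vc by (simp add: mat_adjoint_mult[OF Uc Vc] assoc_mult_mat[of _ n n _ n _ n])
  ultimately show ?thesis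
    using Uc Vc unitary_matD[OF U] unitary_matD[OF V]
    by (simp add: unitary_mat_def unitary_mat_cancel[OF U] unitary_mat_cancel[OF V])
qed

lemma unitary_mat_of_orthonormal_cols:
  assumes W: "W \<in> carrier_mat n n"
    and orth: "\<And>i j. i < n \<Longrightarrow> j < n \<Longrightarrow> col W j \<bullet>c col W i = (if i = j then 1 else 0)"
  shows "unitary_mat n W"
proof -
  have WW: "mat_adjoint W * W = 1\<^sub>m n"
  proof (rule eq_matI)
    fix i j assume i: "i < dim_row (1\<^sub>m n :: complex mat)" and j: "j < dim_col (1\<^sub>m n :: complex mat)"
    have "(mat_adjoint W * W) $$ (i, j) = col W j \<bullet>c col W i"
      using i j W by (simp add: scalar_prod_def lessThan_atLeast0 mult.commute)
    then show "(mat_adjoint W * W) $$ (i, j) = 1\<^sub>m n $$ (i, j)" using orth i j by simp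
  qed (use W in auto)
  then have "W * mat_adjoint W = 1\<^sub>m n"
    by (rule mat_mult_left_right_inverse[OF mat_adjoint_carrier[OF W] W])
  with W WW show ?thesis unfolding unitary_mat_def by blast
qed

section \<open>The spectral theorem for Hermitian matrices\<close>

text \<open>Complete the unit vector to a basis, orthogonalise by Gram--Schmidt (which keeps the first
  vector) and normalise.\<close>
lemma unitary_mat_with_first_col:
  assumes v: "v \<in> carrier_vec n" and v1: "v \<bullet>c v = 1" and n: "0 < n"
  shows "\<exists>W. unitary_mat n W \<and> col W 0 = v"
proof -
  have v0: "v \<noteq> 0\<^sub>v n" using v1 v by auto
  interpret cof_vec_space n "TYPE(complex)" .
  define b where "b = basis_completion v"
  from basis_completion[OF v v0, folded b_def]
  have b: "set b \<subseteq> carrier_vec n" and dist_b: "distinct b" and indep: "\<not> lin_dep (set b)"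
    and hdb: "hd b = v" and len_b: "length b = n" by auto
  define ws where "ws = gram_schmidt n b"
  from gram_schmidt_result[OF b dist_b indep ws_def]
  have ws: "set ws \<subseteq> carrier_vec n" "corthogonal ws" "length ws = n" using len_b by auto
  from hdb len_b n obtain vs where "b = v # vs" by (cases b) auto
  then have "hd ws = v" unfolding ws_def using v by simp
  then have "ws ! 0 = v" using hd_conv_nth[of ws] n ws(3) by fastforce
  have wsi: "ws ! i \<in> carrier_vec n" if "i < n" for i using ws that by auto
  have wsnz: "ws ! i \<noteq> 0\<^sub>v n" if i: "i < n" for i
    using corthogonalD[OF ws(2)] i ws(3) by fastforce
  define W where "W = mat_of_cols n (map vec_normalize ws)"
  have W: "W \<in> carrier_mat n n"
    unfolding W_def using mat_of_cols_carrier(1)[of n "map vec_normalize ws"] ws(3) by simp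
  have colW: "col W j = vec_normalize (ws ! j)" if "j < n" for j
    unfolding W_def using that ws(3) wsi by simp
  have "unitary_mat n W"
  proof (rule unitary_mat_of_orthonormal_cols[OF W])
    fix i j assume i: "i < n" and j: "j < n"
    show "col W j \<bullet>c col W i = (if i = j then 1 else 0)"
    proof (cases "i = j")
      case True
      then show ?thesis using colW[OF j] vec_normalize_unit[OF wsi[OF j] wsnz[OF j]] by simp
    next
      case False
      then have "ws ! j \<bullet>c ws ! i = 0" using corthogonalD[OF ws(2)] i j ws(3) by auto
      then show ?thesis
        using False colW[OF i] colW[OF j] cscalar_prod_vec_normalize[OF wsi[OF j] wsi[OF i]] by simp
    qed
  qed
  moreover have "col W 0 = v" using colW[OF n] \<open>ws ! 0 = v\<close> vec_normalize_id[OF v1] by simp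
  ultimately show ?thesis by blast
qed

lemma unit_eigenvector_exists:
  assumes A: "(A :: complex mat) \<in> carrier_mat (Suc m) (Suc m)"
  shows "\<exists>e v. v \<in> carrier_vec (Suc m) \<and> v \<bullet>c v = 1 \<and> A *\<^sub>v v = e \<cdot>\<^sub>v v"
proof -
  have "degree (char_poly A) = Suc m" using degree_monic_char_poly[OF A] by auto
  then have "\<exists>z. poly (char_poly A) z = 0"
    by (intro fundamental_theorem_of_algebra_alt) (metis degree_pCons_0 Zero_not_Suc)
  then obtain e where "eigenvalue A e" using eigenvalue_root_char_poly[OF A] by blast
  from find_eigenvector[OF A this] obtain v where "eigenvector A v e" by blast
  then have v: "v \<in> carrier_vec (Suc m)" "v \<noteq> 0\<^sub>v (Suc m)" and Av: "A *\<^sub>v v = e \<cdot>\<^sub>v v"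
    unfolding eigenvector_def using A by auto
  have "A *\<^sub>v vec_normalize v = e \<cdot>\<^sub>v vec_normalize v"
    unfolding vec_normalize_def using A v Av by (simp add: mult_mat_vec smult_smult_assoc mult.commute)
  then show ?thesis using v vec_normalize_unit[OF v] vec_normalize_carrier by blast
qed

lemma unitary_conj_eigenvector_col:
  assumes A: "A \<in> carrier_mat n n" and W: "unitary_mat n W" and k: "k < n" and i: "i < n"
    and ev: "A *\<^sub>v col W k = e \<cdot>\<^sub>v col W k"
  shows "(mat_adjoint W * A * W) $$ (i, k) = (if i = k then e else 0)"
proof -
  note Wc = unitary_matD(1)[OF W]
  have "(mat_adjoint W * A * W) $$ (i, k) = scalar_prod (row (mat_adjoint W) i) (col (A * W) k)"
    using i k Wc A by (simp add: assoc_mult_mat[of _ n n _ n _ n])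
  also have "\<dots> = e * scalar_prod (row (mat_adjoint W) i) (col W k)"
    using col_mult2[OF A Wc k] ev Wc i k by simp
  also have "scalar_prod (row (mat_adjoint W) i) (col W k) = (mat_adjoint W * W) $$ (i, k)" using i k Wc by simp
  finally show ?thesis using unitary_matD(2)[OF W] i k by simp
qed

lemma hermitian_first_col_block:
  assumes A: "A \<in> carrier_mat (Suc m) (Suc m)" and hA: "mat_adjoint A = A"
    and col0: "\<And>i. i < Suc m \<Longrightarrow> A $$ (i, 0) = (if i = 0 then e else 0)"
  defines "A3 \<equiv> Matrix.mat m m (\<lambda>(i, j). A $$ (Suc i, Suc j))"
  shows "A = four_block_mat (rdiag 1 (\<lambda>_. Re e)) (0\<^sub>m 1 m) (0\<^sub>m m 1) A3"
    and "mat_adjoint A3 = A3"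
proof -
  have entry: "cnj (A $$ (j, i)) = A $$ (i, j)" if "i < Suc m" "j < Suc m" for i j
    using arg_cong[OF hA, of "\<lambda>M. M $$ (i, j)"] that A by simp
  have "cnj e = e" using entry[of 0 0] col0[of 0] by simp
  then have e: "complex_of_real (Re e) = e" by (metis Reals_cnj_iff complex_is_Real_iff of_real_Re)
  have row0: "A $$ (0, j) = (if j = 0 then e else 0)" if "j < Suc m" for j
    using entry[of 0 j] col0[of j] that \<open>cnj e = e\<close> by (auto split: if_splits)
  show "A = four_block_mat (rdiag 1 (\<lambda>_. Re e)) (0\<^sub>m 1 m) (0\<^sub>m m 1) A3"
  proof (rule eq_matI)
    fix i j assume "i < dim_row (four_block_mat (rdiag 1 (\<lambda>_. Re e)) (0\<^sub>m 1 m) (0\<^sub>m m 1) A3)"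
      "j < dim_col (four_block_mat (rdiag 1 (\<lambda>_. Re e)) (0\<^sub>m 1 m) (0\<^sub>m m 1) A3)"
    then have i: "i < Suc m" and j: "j < Suc m" by (auto simp: A3_def mat_diag_def)
    show "A $$ (i, j) = four_block_mat (rdiag 1 (\<lambda>_. Re e)) (0\<^sub>m 1 m) (0\<^sub>m m 1) A3 $$ (i, j)"
    proof (cases "i = 0 \<or> j = 0")
      case True
      then show ?thesis using col0[OF i] row0[OF j] i j e by (auto simp: A3_def mat_diag_def)
    next
      case False
      then obtain i1 j1 where "i = Suc i1" "j = Suc j1" by (metis not0_implies_Suc)
      then show ?thesis using i j by (simp add: A3_def mat_diag_def)
    qed
  qed (use A in \<open>auto simp: A3_def mat_diag_def\<close>)
  show "mat_adjoint A3 = A3"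
    by (rule eq_matI) (auto simp: A3_def entry)
qed

lemma unitary_mat_four_block_one:
  assumes V: "unitary_mat m V"
  shows "unitary_mat (Suc m) (four_block_mat (1\<^sub>m 1) (0\<^sub>m 1 m) (0\<^sub>m m 1) V)"
proof -
  note Vc = unitary_matD(1)[OF V]
  have adj: "mat_adjoint (four_block_mat (1\<^sub>m 1) (0\<^sub>m 1 m) (0\<^sub>m m 1) V)
      = four_block_mat (1\<^sub>m 1) (0\<^sub>m 1 m) (0\<^sub>m m 1) (mat_adjoint V)"
    by (subst mat_adjoint_four_block[of _ 1 _ m]) (use Vc in auto)
  show ?thesis
    unfolding unitary_mat_def adj using Vc unitary_matD[OF V]
    by (subst (1 2) mult_four_block_mat[of _ 1 1 _ m _ m _ _ 1 _ m]) auto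
qed

lemma rdiag_Suc_four_block:
  "rdiag (Suc m) g = four_block_mat (rdiag 1 (\<lambda>_. g 0)) (0\<^sub>m 1 m) (0\<^sub>m m 1) (rdiag m (\<lambda>i. g (Suc i)))"
  by (rule eq_matI) (auto simp: mat_diag_def)

lemma four_block_one_conj_rdiag:
  assumes V: "V \<in> carrier_mat m m"
  shows "four_block_mat (1\<^sub>m 1) (0\<^sub>m 1 m) (0\<^sub>m m 1) V * rdiag (Suc m) (case_nat r s)
      * mat_adjoint (four_block_mat (1\<^sub>m 1) (0\<^sub>m 1 m) (0\<^sub>m m 1) V)
    = four_block_mat (rdiag 1 (\<lambda>_. r)) (0\<^sub>m 1 m) (0\<^sub>m m 1) (V * rdiag m s * mat_adjoint V)"
proof -
  have "four_block_mat (1\<^sub>m 1) (0\<^sub>m 1 m) (0\<^sub>m m 1) V * rdiag (Suc m) (case_nat r s)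
      = four_block_mat (rdiag 1 (\<lambda>_. r)) (0\<^sub>m 1 m) (0\<^sub>m m 1) (V * rdiag m s)"
    unfolding rdiag_Suc_four_block using V by (subst mult_four_block_mat[of _ 1 1 _ m _ m _ _ 1 _ m]) auto
  then show ?thesis
    using V by (subst mat_adjoint_four_block[of _ 1 _ m], auto, subst mult_four_block_mat[of _ 1 1 _ m _ m _ _ 1 _ m]) auto
qed

lemma mult_conj_mult_adjoint:
  assumes "W \<in> carrier_mat n n" "E \<in> carrier_mat n n" "(M :: complex mat) \<in> carrier_mat n n"
  shows "(W * E) * M * mat_adjoint (W * E) = W * (E * M * mat_adjoint E) * mat_adjoint W"
  using assms by (simp add: mat_adjoint_mult[of _ n n _ n] assoc_mult_mat[of _ n n _ n _ n])

text \<open>Deflation: conjugating by a unitary whose first column is a unit eigenvector splits off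
  a $1 \times 1$ block.\<close>
theorem hermitian_spectral_decomposition:
  assumes "A \<in> carrier_mat n n" "mat_adjoint A = A"
  shows "\<exists>U s. unitary_mat n U \<and> A = U * rdiag n s * mat_adjoint U"
  using assms
proof (induction n arbitrary: A)
  case 0
  then show ?case
    by (intro exI[of _ "1\<^sub>m 0"] exI[of _ "\<lambda>_. 0"]) (auto simp: unitary_mat_def intro!: eq_matI)
next
  case (Suc m A)
  have A: "A \<in> carrier_mat (Suc m) (Suc m)" and hA: "mat_adjoint A = A" using Suc.prems by auto
  obtain e v where v: "v \<in> carrier_vec (Suc m)" "v \<bullet>c v = 1" and Av: "A *\<^sub>v v = e \<cdot>\<^sub>v v"
    using unit_eigenvector_exists[OF A] by blast
  obtain W where W: "unitary_mat (Suc m) W" and colW: "col W 0 = v"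
    using unitary_mat_with_first_col[OF v] by blast
  note Wc = unitary_matD(1)[OF W]
  define A' where "A' = mat_adjoint W * A * W"
  define A3 where "A3 = Matrix.mat m m (\<lambda>(i, j). A' $$ (Suc i, Suc j))"
  have A'c: "A' \<in> carrier_mat (Suc m) (Suc m)" unfolding A'_def using Wc A by simp
  have hA': "mat_adjoint A' = A'"
    unfolding A'_def using Wc A hA
    by (simp add: mat_adjoint_mult[of _ "Suc m" "Suc m" _ "Suc m"] assoc_mult_mat[of _ "Suc m" "Suc m" _ "Suc m" _ "Suc m"])
  have col0: "A' $$ (i, 0) = (if i = 0 then e else 0)" if "i < Suc m" for i
    unfolding A'_def using unitary_conj_eigenvector_col[OF A W _ that] Av colW by simp
  note block = hermitian_first_col_block[OF A'c hA' col0, folded A3_def]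
  obtain V s where V: "unitary_mat m V" and A3: "A3 = V * rdiag m s * mat_adjoint V"
    using Suc.IH[OF _ block(2)] by (auto simp: A3_def)
  define E where "E = four_block_mat (1\<^sub>m 1) (0\<^sub>m 1 m) (0\<^sub>m m 1) V"
  have E: "unitary_mat (Suc m) E" unfolding E_def by (rule unitary_mat_four_block_one[OF V])
  have "E * rdiag (Suc m) (case_nat (Re e) s) * mat_adjoint E = A'"
    unfolding E_def four_block_one_conj_rdiag[OF unitary_matD(1)[OF V]] A3[symmetric] using block(1) by simp
  then have "A = (W * E) * rdiag (Suc m) (case_nat (Re e) s) * mat_adjoint (W * E)"
    unfolding mult_conj_mult_adjoint[OF Wc unitary_matD(1)[OF E] mat_diag_dim] A'_def
    by (simp add: unitary_mat_conj_cancel(2)[OF W A])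
  then show ?case using unitary_mat_mult[OF W E] by blast
qed

section \<open>Functional calculus\<close>

text \<open>An entry $G_{ij}$ of a matrix intertwining two real diagonals can only be nonzero where
  $s_j = t_i$.\<close>
lemma rdiag_intertwine_fun:
  assumes G: "G \<in> carrier_mat n n" and eq: "G * rdiag n s = rdiag n t * G"
  shows "G * rdiag n (\<lambda>i. f (s i)) = rdiag n (\<lambda>i. f (t i)) * G"
proof (rule eq_matI)
  fix i j assume "i < dim_row (rdiag n (\<lambda>i. f (t i)) * G)" "j < dim_col (rdiag n (\<lambda>i. f (t i)) * G)"
  then have i: "i < n" and j: "j < n" using G by auto
  have "(G * rdiag n s) $$ (i, j) = (rdiag n t * G) $$ (i, j)" using eq by simp
  then have "G $$ (i, j) * (complex_of_real (s j) - complex_of_real (t i)) = 0"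
    using i j G by (simp add: mat_diag_mult_left[OF G] mat_diag_mult_right[OF G] right_diff_distrib mult.commute)
  then have "G $$ (i, j) * complex_of_real (f (s j)) = complex_of_real (f (t i)) * G $$ (i, j)"
    by (cases "G $$ (i, j) = 0") (simp_all add: mult.commute)
  then show "(G * rdiag n (\<lambda>i. f (s i))) $$ (i, j) = (rdiag n (\<lambda>i. f (t i)) * G) $$ (i, j)"
    using i j G by (simp add: mat_diag_mult_left[OF G] mat_diag_mult_right[OF G])
qed (use G in auto)

lemma unitary_conj_rdiag_fun_unique:
  assumes U: "unitary_mat n U" and V: "unitary_mat n V"
    and eq: "U * rdiag n s * mat_adjoint U = V * rdiag n t * mat_adjoint V"
  shows "U * rdiag n (\<lambda>i. f (s i)) * mat_adjoint U = V * rdiag n (\<lambda>i. f (t i)) * mat_adjoint V"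
proof -
  note Uc = unitary_matD(1)[OF U] and Vc = unitary_matD(1)[OF V]
  define G where "G = mat_adjoint V * U"
  have Gc: "G \<in> carrier_mat n n" unfolding G_def using Uc Vc by simp
  have "G * rdiag n s = mat_adjoint V * ((U * rdiag n s * mat_adjoint U) * U)"
    unfolding G_def using Uc Vc
    by (simp add: assoc_mult_mat[of _ n n _ n _ n] unitary_mat_cancel[OF U] unitary_matD[OF U])
  also have "\<dots> = rdiag n t * G"
    unfolding eq G_def using Uc Vc
    by (simp add: assoc_mult_mat[of _ n n _ n _ n] unitary_mat_cancel[OF V] unitary_matD[OF V])
  finally have "G * rdiag n (\<lambda>i. f (s i)) = rdiag n (\<lambda>i. f (t i)) * G"
    by (rule rdiag_intertwine_fun[OF Gc])
  then have "V * (G * rdiag n (\<lambda>i. f (s i))) * mat_adjoint U = V * (rdiag n (\<lambda>i. f (t i)) * G) * mat_adjoint U"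
    by simp
  then show ?thesis
    unfolding G_def using Uc Vc
    by (simp add: assoc_mult_mat[of _ n n _ n _ n] unitary_mat_cancel[OF V] unitary_mat_cancel[OF U]
        unitary_matD[OF U] unitary_matD[OF V])
qed

lemma mat_fun_unitary_conj_rdiag:
  assumes U: "unitary_mat d U"
  shows "mat_fun d f (U * rdiag d s * mat_adjoint U) = U * rdiag d (\<lambda>i. f (s i)) * mat_adjoint U"
proof -
  let ?A = "U * rdiag d s * mat_adjoint U"
  let ?P = "\<lambda>B. \<exists>U s. unitary_mat d U \<and> ?A = U * rdiag d s * mat_adjoint U \<and>
      B = U * rdiag d (\<lambda>i. f (s i)) * mat_adjoint U"
  have "?P (mat_fun d f ?A)" unfolding mat_fun_def by (rule someI_ex) (use U in blast)
  then obtain U' s' where U': "unitary_mat d U'" and A': "?A = U' * rdiag d s' * mat_adjoint U'"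
    and B: "mat_fun d f ?A = U' * rdiag d (\<lambda>i. f (s' i)) * mat_adjoint U'" by blast
  show ?thesis unfolding B by (rule unitary_conj_rdiag_fun_unique[OF U' U]) (use A' in simp)
qed

lemma unitary_conj_rdiag_mult:
  assumes U: "unitary_mat d U"
  shows "(U * rdiag d g * mat_adjoint U) * (U * rdiag d h * mat_adjoint U)
    = U * rdiag d (\<lambda>i. g i * h i) * mat_adjoint U"
proof -
  note Uc = unitary_matD(1)[OF U]
  have "(U * rdiag d g * mat_adjoint U) * (U * rdiag d h * mat_adjoint U)
      = U * (rdiag d g * (mat_adjoint U * (U * (rdiag d h * mat_adjoint U))))"
    using Uc by (simp add: assoc_mult_mat[of _ d d _ d _ d])
  also have "\<dots> = U * (rdiag d g * (rdiag d h * mat_adjoint U))"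
    by (simp add: unitary_mat_cancel[OF U])
  also have "\<dots> = U * rdiag d (\<lambda>i. g i * h i) * mat_adjoint U"
    using Uc by (simp add: assoc_mult_mat[of _ d d _ d _ d, symmetric])
  finally show ?thesis .
qed

section \<open>Traces\<close>

lemma mtrace_mult_comm:
  assumes A: "(A :: complex mat) \<in> carrier_mat n m" and B: "B \<in> carrier_mat m n"
  shows "mtrace (A * B) = mtrace (B * A)"
proof -
  have "mtrace (A * B) = (\<Sum>i<n. \<Sum>k<m. A $$ (i, k) * B $$ (k, i))"
    unfolding mtrace_def using A B by (simp add: scalar_prod_def lessThan_atLeast0)
  also have "\<dots> = (\<Sum>k<m. \<Sum>i<n. B $$ (k, i) * A $$ (i, k))"
    by (subst sum.swap) (simp add: mult.commute)
  also have "\<dots> = mtrace (B * A)"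
    unfolding mtrace_def using A B by (simp add: scalar_prod_def lessThan_atLeast0)
  finally show ?thesis .
qed

lemma mtrace_add:
  "(A :: complex mat) \<in> carrier_mat n n \<Longrightarrow> B \<in> carrier_mat n n \<Longrightarrow> mtrace (A + B) = mtrace A + mtrace B"
  unfolding mtrace_def by (simp add: sum.distrib)

lemma mtrace_minus:
  "(A :: complex mat) \<in> carrier_mat n n \<Longrightarrow> B \<in> carrier_mat n n \<Longrightarrow> mtrace (A - B) = mtrace A - mtrace B"
  unfolding mtrace_def by (simp add: sum_subtractf)

lemma mtrace_adjoint: "(M :: complex mat) \<in> carrier_mat n n \<Longrightarrow> mtrace (mat_adjoint M) = cnj (mtrace M)"
  unfolding mtrace_def by simp

lemma mtrace_unitary_conj_rdiag:
  assumes U: "unitary_mat d U"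
  shows "mtrace (U * rdiag d g * mat_adjoint U) = (\<Sum>i<d. complex_of_real (g i))"
proof -
  note Uc = unitary_matD(1)[OF U]
  have "mtrace ((U * rdiag d g) * mat_adjoint U) = mtrace (mat_adjoint U * (U * rdiag d g))"
    by (rule mtrace_mult_comm[of _ d d]) (use Uc in auto)
  then show ?thesis using Uc by (simp add: unitary_mat_cancel[OF U] mtrace_def mat_diag_def)
qed

lemma sum_Re_diag_sq_le_mtrace:
  assumes G: "(G :: complex mat) \<in> carrier_mat d d"
  shows "(\<Sum>j<d. (Re (G $$ (j, j)))\<^sup>2) \<le> Re (mtrace (mat_adjoint G * G))"
proof -
  have "mtrace (mat_adjoint G * G) = (\<Sum>j<d. \<Sum>k<d. cnj (G $$ (k, j)) * G $$ (k, j))"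
    unfolding mtrace_def using G by (simp add: scalar_prod_def lessThan_atLeast0)
  also have "\<dots> = (\<Sum>j<d. \<Sum>k<d. complex_of_real ((cmod (G $$ (k, j)))\<^sup>2))"
    by (intro sum.cong refl) (metis complex_norm_square mult.commute)
  finally have tr: "Re (mtrace (mat_adjoint G * G)) = (\<Sum>j<d. \<Sum>k<d. (cmod (G $$ (k, j)))\<^sup>2)"
    by simp
  have "(Re (G $$ (j, j)))\<^sup>2 \<le> (\<Sum>k<d. (cmod (G $$ (k, j)))\<^sup>2)" if j: "j < d" for j
  proof -
    have "(Re (G $$ (j, j)))\<^sup>2 \<le> (cmod (G $$ (j, j)))\<^sup>2"
      using power_mono[OF abs_Re_le_cmod[of "G $$ (j, j)"] abs_ge_zero, of 2] by simp
    also have "\<dots> \<le> (\<Sum>k<d. (cmod (G $$ (k, j)))\<^sup>2)"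
      by (rule member_le_sum) (use j in auto)
    finally show ?thesis .
  qed
  then show ?thesis unfolding tr by (intro sum_mono) auto
qed

lemma mtrace_adjoint_mult_unitary_conj:
  assumes W: "unitary_mat d W" and B: "(B :: complex mat) \<in> carrier_mat d d"
  shows "mtrace (mat_adjoint (mat_adjoint W * B * W) * (mat_adjoint W * B * W)) = mtrace (mat_adjoint B * B)"
proof -
  note Wc = unitary_matD(1)[OF W]
  have "mat_adjoint (mat_adjoint W * B * W) * (mat_adjoint W * B * W)
      = mat_adjoint W * (mat_adjoint B * (B * W))"
    using Wc B
    by (simp add: mat_adjoint_mult[of _ d d _ d] assoc_mult_mat[of _ d d _ d _ d] unitary_mat_cancel[OF W])
  also have "mtrace \<dots> = mtrace ((mat_adjoint B * (B * W)) * mat_adjoint W)"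
    by (rule mtrace_mult_comm[of _ d d]) (use Wc B in simp_all)
  also have "(mat_adjoint B * (B * W)) * mat_adjoint W = mat_adjoint B * B"
    using Wc B unitary_matD(3)[OF W] by (simp add: assoc_mult_mat[of _ d d _ d _ d])
  finally show ?thesis .
qed

lemma wnorm_powr_unitary_conj_rdiag:
  assumes d: "0 < d" and U: "unitary_mat d U" and g: "\<And>i. i < d \<Longrightarrow> 0 \<le> g i" and q: "0 < q"
  shows "wnorm d q (U * rdiag d g * mat_adjoint U) powr q = (\<Sum>i<d. g i powr q) / real d"
proof -
  let ?A = "U * rdiag d g * mat_adjoint U"
  have "mat_adjoint ?A * ?A = U * rdiag d (\<lambda>i. g i * g i) * mat_adjoint U"
    unfolding mat_adjoint_conj[OF unitary_matD(1)[OF U] mat_diag_dim] mat_adjoint_rdiag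
    by (rule unitary_conj_rdiag_mult[OF U])
  then have "mat_abs d ?A = U * rdiag d (\<lambda>i. sqrt (g i * g i)) * mat_adjoint U"
    unfolding mat_abs_def by (simp only: mat_fun_unitary_conj_rdiag[OF U])
  also have "rdiag d (\<lambda>i. sqrt (g i * g i)) = rdiag d g"
    using g by (intro eq_matI) (auto simp: mat_diag_def)
  finally have "mat_abs d ?A = ?A" .
  then have "Re (mtrace (mat_rpow d (mat_abs d ?A) q)) = (\<Sum>i<d. g i powr q)"
    unfolding mat_rpow_def by (simp add: mat_fun_unitary_conj_rdiag[OF U] mtrace_unitary_conj_rdiag[OF U])
  moreover have "0 \<le> (\<Sum>i<d. g i powr q)" by (intro sum_nonneg) auto
  ultimately have "wnorm d q ?A powr q = (real d powr (- 1 / q)) powr q * ((\<Sum>i<d. g i powr q) powr (1 / q)) powr q"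
    unfolding wnorm_def by (simp add: powr_mult)
  also have "\<dots> = real d powr (- 1) * (\<Sum>i<d. g i powr q)"
    using q \<open>0 \<le> (\<Sum>i<d. g i powr q)\<close> by (simp add: powr_powr)
  finally show ?thesis using d by (simp add: powr_minus_divide)
qed

section \<open>Positivity\<close>

lemma cscalar_prod_mult_mat_vec:
  assumes A: "(A :: complex mat) \<in> carrier_mat n m" and z: "z \<in> carrier_vec m" and v: "v \<in> carrier_vec n"
  shows "(A *\<^sub>v z) \<bullet>c v = z \<bullet>c (mat_adjoint A *\<^sub>v v)"
proof -
  have "(A *\<^sub>v z) \<bullet>c v = (\<Sum>i<n. \<Sum>k<m. A $$ (i, k) * z $ k * cnj (v $ i))"
    using A z v by (simp add: scalar_prod_def lessThan_atLeast0 sum_distrib_right)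
  also have "\<dots> = (\<Sum>k<m. \<Sum>i<n. A $$ (i, k) * z $ k * cnj (v $ i))"
    by (rule sum.swap)
  also have "\<dots> = (\<Sum>k<m. z $ k * cnj (\<Sum>i<n. cnj (A $$ (i, k)) * v $ i))"
    by (simp add: sum_distrib_left mult_ac)
  also have "\<dots> = z \<bullet>c (mat_adjoint A *\<^sub>v v)"
    using A z v by (simp add: scalar_prod_def lessThan_atLeast0)
  finally show ?thesis .
qed

lemma row_mat_adjoint: "j < dim_col W \<Longrightarrow> row (mat_adjoint W) j = conjugate (col (W :: complex mat) j)"
  by (intro eq_vecI) auto

lemma diag_entry_adjoint_conj:
  assumes W: "(W :: complex mat) \<in> carrier_mat n n" and M: "M \<in> carrier_mat n n" and j: "j < n"
  shows "(mat_adjoint W * M * W) $$ (j, j) = (M *\<^sub>v col W j) \<bullet>c col W j"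
proof -
  have "(mat_adjoint W * M * W) $$ (j, j) = scalar_prod (row (mat_adjoint W) j) (col (M * W) j)"
    using W M j by (simp add: assoc_mult_mat[OF mat_adjoint_carrier[OF W] M W])
  also have "\<dots> = scalar_prod (conjugate (col W j)) (M *\<^sub>v col W j)"
    using W j by (simp add: row_mat_adjoint col_mult2[OF M W j])
  also have "\<dots> = (M *\<^sub>v col W j) \<bullet>c col W j"
    by (rule conjugate_vec_sprod_comm[symmetric, of _ n]) (use W M j in auto)
  finally show ?thesis .
qed

lemma psd_mat_conj_rdiag:
  assumes U: "(U :: complex mat) \<in> carrier_mat n n" and g: "\<And>i. i < n \<Longrightarrow> 0 \<le> g i"
  shows "psd_mat n (U * rdiag n g * mat_adjoint U)"
  unfolding psd_mat_def hermitian_mat_def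
proof (intro conjI ballI)
  show "U * rdiag n g * mat_adjoint U \<in> carrier_mat n n" using U by simp
  show "mat_adjoint (U * rdiag n g * mat_adjoint U) = U * rdiag n g * mat_adjoint U"
    by (simp add: mat_adjoint_conj[OF U mat_diag_dim])
  fix v :: "complex vec" assume v: "v \<in> carrier_vec n"
  define w where "w = mat_adjoint U *\<^sub>v v"
  have w: "w \<in> carrier_vec n" unfolding w_def using mult_mat_vec_carrier[OF mat_adjoint_carrier[OF U] v] .
  have Dw: "rdiag n g *\<^sub>v w \<in> carrier_vec n" using mult_mat_vec_carrier[OF mat_diag_dim w] .
  have "U * rdiag n g * mat_adjoint U *\<^sub>v v = U * rdiag n g *\<^sub>v w"
    unfolding w_def by (rule assoc_mult_mat_vec[OF mult_carrier_mat[OF U mat_diag_dim] mat_adjoint_carrier[OF U] v])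
  also have "\<dots> = U *\<^sub>v (rdiag n g *\<^sub>v w)" by (rule assoc_mult_mat_vec[OF U mat_diag_dim w])
  finally have "U * rdiag n g * mat_adjoint U *\<^sub>v v = U *\<^sub>v (rdiag n g *\<^sub>v w)" .
  then have "(U * rdiag n g * mat_adjoint U *\<^sub>v v) \<bullet>c v = (rdiag n g *\<^sub>v w) \<bullet>c w"
    using cscalar_prod_mult_mat_vec[OF U Dw v] unfolding w_def by simp
  also have "\<dots> = (\<Sum>i<n. (complex_of_real (g i) * w $ i) * cnj (w $ i))"
    using w by (simp add: scalar_prod_def lessThan_atLeast0 mat_diag_def if_distrib[of "\<lambda>x. x * _"] cong: if_cong)
  finally have "Re ((U * rdiag n g * mat_adjoint U *\<^sub>v v) \<bullet>c v) = (\<Sum>i<n. g i * ((Re (w $ i))\<^sup>2 + (Im (w $ i))\<^sup>2))"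
    by (simp add: mult.assoc power2_eq_square)
  also have "\<dots> \<ge> 0" using g by (intro sum_nonneg) auto
  finally show "0 \<le> Re ((U * rdiag n g * mat_adjoint U *\<^sub>v v) \<bullet>c v)" .
qed

lemma pd_mat_unitary_conj_rdiag_pos:
  assumes pd: "pd_mat d (U * rdiag d s * mat_adjoint U)" and U: "unitary_mat d U" and i: "i < d"
  shows "0 < s i"
proof -
  note Uc = unitary_matD(1)[OF U]
  let ?X = "U * rdiag d s * mat_adjoint U"
  have ci: "col U i \<in> carrier_vec d" using Uc i by (simp add: carrier_vecI)
  have "col U i \<bullet>c col U i = (mat_adjoint U * 1\<^sub>m d * U) $$ (i, i)"
    using diag_entry_adjoint_conj[OF Uc one_carrier_mat i] ci by simp
  then have "col U i \<noteq> 0\<^sub>v d" using unitary_matD(2)[OF U] Uc i by auto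
  then have "0 < Re ((?X *\<^sub>v col U i) \<bullet>c col U i)" using pd ci unfolding pd_mat_def by blast
  also have "(?X *\<^sub>v col U i) \<bullet>c col U i = (mat_adjoint U * ?X * U) $$ (i, i)"
    using diag_entry_adjoint_conj[OF Uc _ i, of ?X] Uc by simp
  also have "\<dots> = complex_of_real (s i)"
    unfolding unitary_mat_conj_cancel(1)[OF U mat_diag_dim] using i by (simp add: mat_diag_def)
  finally show ?thesis by simp
qed

lemma ampliate_one:
  assumes "M \<in> carrier_mat d d" "T M \<in> carrier_mat d d"
  shows "ampliate 1 d T M = T M"
proof -
  have "Matrix.mat d d (\<lambda>(a, b). M $$ (0 * d + a, 0 * d + b)) = M"
    using assms by (intro eq_matI) auto
  then show ?thesis unfolding ampliate_def using assms by (intro eq_matI) auto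
qed

lemma completely_positive_imp_psd:
  assumes cp: "completely_positive d T" and lin: "linear_map_mat d T" and M: "psd_mat d M"
  shows "psd_mat d (T M)"
proof -
  have Mc: "M \<in> carrier_mat d d" using M unfolding psd_mat_def hermitian_mat_def by auto
  have "psd_mat (1 * d) (ampliate 1 d T M)"
    using cp M unfolding completely_positive_def by (metis mult_1)
  then show ?thesis
    using ampliate_one[OF Mc] lin Mc unfolding linear_map_mat_def by simp
qed

section \<open>Finite sums of matrices and the Hilbert--Schmidt adjoint\<close>

fun mat_sum :: "nat \<Rightarrow> (nat \<Rightarrow> complex mat) \<Rightarrow> nat \<Rightarrow> complex mat" where
  "mat_sum d f 0 = 0\<^sub>m d d"
| "mat_sum d f (Suc k) = mat_sum d f k + f k"

lemma mat_sum_carrier: "(\<And>i. i < k \<Longrightarrow> f i \<in> carrier_mat d d) \<Longrightarrow> mat_sum d f k \<in> carrier_mat d d"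
  by (induction k) auto

lemma index_mat_sum:
  assumes "\<And>i. i < k \<Longrightarrow> f i \<in> carrier_mat d d" "a < d" "b < d"
  shows "mat_sum d f k $$ (a, b) = (\<Sum>i<k. f i $$ (a, b))"
  using assms
proof (induction k)
  case (Suc k)
  have "f k \<in> carrier_mat d d" using Suc.prems by auto
  then show ?case using Suc carrier_matD[of "f k" d d] by simp
qed simp

lemma mat_sum_cong: "(\<And>i. i < k \<Longrightarrow> f i = g i) \<Longrightarrow> mat_sum d f k = mat_sum d g k"
  by (induction k) auto

lemma linear_map_mat_zero:
  assumes T: "linear_map_mat d T"
  shows "T (0\<^sub>m d d) = 0\<^sub>m d d"
proof -
  have "T (0\<^sub>m d d) = T ((0 :: complex) \<cdot>\<^sub>m 0\<^sub>m d d)" by (rule arg_cong[of _ _ T]) auto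
  also have "\<dots> = 0 \<cdot>\<^sub>m T (0\<^sub>m d d)"
    using T zero_carrier_mat[of d d] unfolding linear_map_mat_def by blast
  finally have eq: "T (0\<^sub>m d d) = 0 \<cdot>\<^sub>m T (0\<^sub>m d d)" .
  have "T (0\<^sub>m d d) \<in> carrier_mat d d" using T unfolding linear_map_mat_def by auto
  then show ?thesis
  proof (intro eq_matI)
    fix i j assume "i < dim_row (0\<^sub>m d d :: complex mat)" "j < dim_col (0\<^sub>m d d :: complex mat)"
    then show "T (0\<^sub>m d d) $$ (i, j) = 0\<^sub>m d d $$ (i, j)"
      using arg_cong[OF eq, of "\<lambda>M. M $$ (i, j)"] \<open>T (0\<^sub>m d d) \<in> carrier_mat d d\<close> by simp
  qed auto
qed

lemma linear_map_mat_sum: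
  assumes T: "linear_map_mat d T" and f: "\<And>i. i < k \<Longrightarrow> f i \<in> carrier_mat d d"
  shows "T (mat_sum d f k) = mat_sum d (\<lambda>i. T (f i)) k"
  using f
proof (induction k)
  case 0
  then show ?case using linear_map_mat_zero[OF T] by simp
next
  case (Suc k)
  then show ?case using T mat_sum_carrier[of k f d] unfolding linear_map_mat_def by auto
qed

lemma linear_map_mat_sum_smult:
  assumes T: "linear_map_mat d T" and f: "\<And>i. i < k \<Longrightarrow> f i \<in> carrier_mat d d"
  shows "T (mat_sum d (\<lambda>i. c i \<cdot>\<^sub>m f i) k) = mat_sum d (\<lambda>i. c i \<cdot>\<^sub>m T (f i)) k"
proof -
  have "T (mat_sum d (\<lambda>i. c i \<cdot>\<^sub>m f i) k) = mat_sum d (\<lambda>i. T (c i \<cdot>\<^sub>m f i)) k"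
    by (rule linear_map_mat_sum[OF T]) (simp add: f)
  also have "\<dots> = mat_sum d (\<lambda>i. c i \<cdot>\<^sub>m T (f i)) k"
    using T f unfolding linear_map_mat_def by (intro mat_sum_cong) simp
  finally show ?thesis .
qed

lemma mult_smult_conj:
  assumes "(X :: complex mat) \<in> carrier_mat d d" "M \<in> carrier_mat d d" "Y \<in> carrier_mat d d"
  shows "X * (c \<cdot>\<^sub>m M) * Y = c \<cdot>\<^sub>m (X * M * Y)"
  unfolding mult_smult_distrib[OF assms(1,2)] mult_smult_assoc_mat[OF mult_carrier_mat[OF assms(1,2)] assms(3)] ..

lemma mat_sum_conj:
  assumes X: "X \<in> carrier_mat d d" and Y: "Y \<in> carrier_mat d d"
    and f: "\<And>i. i < k \<Longrightarrow> f i \<in> carrier_mat d d"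
  shows "X * mat_sum d f k * Y = mat_sum d (\<lambda>i. X * f i * Y) k"
  using f
proof (induction k)
  case 0
  then show ?case using X Y by simp
next
  case (Suc k)
  have fk: "f k \<in> carrier_mat d d" and s: "mat_sum d f k \<in> carrier_mat d d"
    using Suc.prems mat_sum_carrier[of k f d] by auto
  then show ?case
    using Suc X Y by (simp add: mult_add_distrib_mat[OF X s fk] add_mult_distrib_mat[of _ d d _ _ d])
qed

lemma mtrace_mult_mat_sum:
  assumes X: "X \<in> carrier_mat d d" and f: "\<And>i. i < k \<Longrightarrow> f i \<in> carrier_mat d d"
  shows "mtrace (X * mat_sum d f k) = (\<Sum>i<k. mtrace (X * f i))"
  using f
proof (induction k)
  case 0
  then show ?case using X by (simp add: mtrace_def)
next
  case (Suc k)
  have fk: "f k \<in> carrier_mat d d" and s: "mat_sum d f k \<in> carrier_mat d d"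
    using Suc.prems mat_sum_carrier[of k f d] by auto
  then show ?case
    using Suc X by (simp add: mult_add_distrib_mat[OF X s fk] mtrace_add[of _ d])
qed

lemma mtrace_mult_smult:
  "X \<in> carrier_mat d d \<Longrightarrow> M \<in> carrier_mat d d \<Longrightarrow> mtrace (X * (c \<cdot>\<^sub>m M)) = c * mtrace (X * M)"
  unfolding mtrace_def by (simp add: mult_smult_distrib[of _ d d] sum_distrib_left)

definition mat_unit :: "nat \<Rightarrow> nat \<Rightarrow> nat \<Rightarrow> complex mat" where
  "mat_unit d k l = Matrix.mat d d (\<lambda>(i, j). if i = k \<and> j = l then 1 else 0)"

lemma mat_unit_carrier [simp]: "mat_unit d k l \<in> carrier_mat d d"
  unfolding mat_unit_def by simp

lemma dim_mat_unit [simp]: "dim_row (mat_unit d k l) = d" "dim_col (mat_unit d k l) = d"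
  unfolding mat_unit_def by simp_all

lemma index_mat_unit [simp]:
  "i < d \<Longrightarrow> j < d \<Longrightarrow> mat_unit d k l $$ (i, j) = (if i = k \<and> j = l then 1 else 0)"
  unfolding mat_unit_def by simp

lemma mat_unit_diag: "mat_unit d i i = rdiag d (\<lambda>k. if k = i then 1 else 0)"
  unfolding mat_unit_def by (rule eq_matI) (auto simp: mat_diag_def)

lemma mat_eq_sum_mat_unit:
  assumes B: "B \<in> carrier_mat d d"
  shows "B = mat_sum d (\<lambda>k. mat_sum d (\<lambda>l. B $$ (k, l) \<cdot>\<^sub>m mat_unit d k l) d) d"
proof -
  have inner: "mat_sum d (\<lambda>l. B $$ (k, l) \<cdot>\<^sub>m mat_unit d k l) d \<in> carrier_mat d d" for k
    by (rule mat_sum_carrier) simp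
  have outer: "mat_sum d (\<lambda>k. mat_sum d (\<lambda>l. B $$ (k, l) \<cdot>\<^sub>m mat_unit d k l) d) d \<in> carrier_mat d d"
    by (rule mat_sum_carrier[OF inner])
  show ?thesis
  proof (rule eq_matI)
    fix a b assume "a < dim_row (mat_sum d (\<lambda>k. mat_sum d (\<lambda>l. B $$ (k, l) \<cdot>\<^sub>m mat_unit d k l) d) d)"
      "b < dim_col (mat_sum d (\<lambda>k. mat_sum d (\<lambda>l. B $$ (k, l) \<cdot>\<^sub>m mat_unit d k l) d) d)"
    then have a: "a < d" and b: "b < d" using outer by auto
    have "mat_sum d (\<lambda>k. mat_sum d (\<lambda>l. B $$ (k, l) \<cdot>\<^sub>m mat_unit d k l) d) d $$ (a, b)
        = (\<Sum>k<d. \<Sum>l<d. B $$ (k, l) * (if a = k \<and> b = l then 1 else 0))"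
      using a b by (simp add: index_mat_sum mat_sum_carrier)
    also have "\<dots> = B $$ (a, b)"
    proof -
      have "(\<Sum>l<d. B $$ (k, l) * (if a = k \<and> b = l then 1 else 0)) = (if a = k then B $$ (k, b) else 0)" for k
        using b by (cases "a = k") (simp_all add: if_distrib[of "(*) _"] cong: if_cong)
      then show ?thesis using a by simp
    qed
    finally show "B $$ (a, b) = mat_sum d (\<lambda>k. mat_sum d (\<lambda>l. B $$ (k, l) \<cdot>\<^sub>m mat_unit d k l) d) d $$ (a, b)" ..
  qed (use B outer in auto)
qed

lemma hs_adjoint_exists:
  assumes T: "linear_map_mat d T" and A: "(A :: complex mat) \<in> carrier_mat d d"
  shows "\<exists>C. C \<in> carrier_mat d d \<and>
    (\<forall>B \<in> carrier_mat d d. mtrace (mat_adjoint C * B) = mtrace (mat_adjoint A * T B))"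
proof -
  define C where "C = Matrix.mat d d (\<lambda>(k, l). cnj (mtrace (mat_adjoint A * T (mat_unit d k l))))"
  have TE: "T (mat_unit d k l) \<in> carrier_mat d d" for k l using T unfolding linear_map_mat_def by auto
  have "mtrace (mat_adjoint C * B) = mtrace (mat_adjoint A * T B)" if B: "B \<in> carrier_mat d d" for B
  proof -
    let ?row = "\<lambda>k. mat_sum d (\<lambda>l. B $$ (k, l) \<cdot>\<^sub>m mat_unit d k l) d"
    have row: "?row k \<in> carrier_mat d d" for k by (rule mat_sum_carrier) simp
    have "T B = mat_sum d (\<lambda>k. T (?row k)) d"
      using arg_cong[OF mat_eq_sum_mat_unit[OF B], of T] linear_map_mat_sum[OF T row] by simp
    also have "\<dots> = mat_sum d (\<lambda>k. mat_sum d (\<lambda>l. B $$ (k, l) \<cdot>\<^sub>m T (mat_unit d k l)) d) d"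
      by (intro mat_sum_cong linear_map_mat_sum_smult[OF T]) simp
    finally have "mtrace (mat_adjoint A * T B)
        = mtrace (mat_adjoint A * mat_sum d (\<lambda>k. mat_sum d (\<lambda>l. B $$ (k, l) \<cdot>\<^sub>m T (mat_unit d k l)) d) d)"
      by simp
    also have "\<dots> = (\<Sum>k<d. \<Sum>l<d. B $$ (k, l) * mtrace (mat_adjoint A * T (mat_unit d k l)))"
      using A TE by (simp add: mtrace_mult_mat_sum mtrace_mult_smult[OF mat_adjoint_carrier[OF A] TE] mat_sum_carrier)
    also have "\<dots> = mtrace (mat_adjoint C * B)"
      unfolding mtrace_def C_def using B
      by (simp add: scalar_prod_def lessThan_atLeast0 mult.commute) (subst sum.swap, rule refl)
    finally show ?thesis ..
  qed
  moreover have "C \<in> carrier_mat d d" unfolding C_def by simp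
  ultimately show ?thesis by blast
qed

lemma hs_adjointD:
  assumes "linear_map_mat d T" "(A :: complex mat) \<in> carrier_mat d d"
  shows "hs_adjoint d T A \<in> carrier_mat d d"
    and "B \<in> carrier_mat d d \<Longrightarrow> mtrace (mat_adjoint (hs_adjoint d T A) * B) = mtrace (mat_adjoint A * T B)"
  using someI_ex[OF hs_adjoint_exists[OF assms]] unfolding hs_adjoint_def[symmetric] by auto

section \<open>Transition weights between two eigenbases\<close>

lemma rdiag_eq_sum_mat_unit: "rdiag d g = mat_sum d (\<lambda>i. complex_of_real (g i) \<cdot>\<^sub>m mat_unit d i i) d"
proof (rule eq_matI)
  fix a b assume "a < dim_row (mat_sum d (\<lambda>i. complex_of_real (g i) \<cdot>\<^sub>m mat_unit d i i) d)"
    "b < dim_col (mat_sum d (\<lambda>i. complex_of_real (g i) \<cdot>\<^sub>m mat_unit d i i) d)"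
  then have a: "a < d" and b: "b < d"
    using mat_sum_carrier[of d "\<lambda>i. complex_of_real (g i) \<cdot>\<^sub>m mat_unit d i i" d] by auto
  have "mat_sum d (\<lambda>i. complex_of_real (g i) \<cdot>\<^sub>m mat_unit d i i) d $$ (a, b)
      = (\<Sum>i<d. complex_of_real (g i) * (if a = i \<and> b = i then 1 else 0))"
    using a b by (simp add: index_mat_sum)
  also have "\<dots> = rdiag d g $$ (a, b)"
    using a b by (auto simp: mat_diag_def if_distrib[of "(*) _"] cong: if_cong)
  finally show "rdiag d g $$ (a, b) = mat_sum d (\<lambda>i. complex_of_real (g i) \<cdot>\<^sub>m mat_unit d i i) d $$ (a, b)" ..
qed (use mat_sum_carrier[of d "\<lambda>i. complex_of_real (g i) \<cdot>\<^sub>m mat_unit d i i" d] in auto)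

definition spectral_proj :: "nat \<Rightarrow> complex mat \<Rightarrow> nat \<Rightarrow> complex mat" where
  "spectral_proj d U i = U * mat_unit d i i * mat_adjoint U"

lemma spectral_proj_carrier [simp]: "U \<in> carrier_mat d d \<Longrightarrow> spectral_proj d U i \<in> carrier_mat d d"
  unfolding spectral_proj_def by simp

lemma spectral_proj_psd: "U \<in> carrier_mat d d \<Longrightarrow> psd_mat d (spectral_proj d U i)"
  unfolding spectral_proj_def mat_unit_diag by (rule psd_mat_conj_rdiag) auto

lemma unitary_conj_rdiag_eq_sum:
  assumes U: "U \<in> carrier_mat d d"
  shows "U * rdiag d g * mat_adjoint U = mat_sum d (\<lambda>i. complex_of_real (g i) \<cdot>\<^sub>m spectral_proj d U i) d"
  unfolding rdiag_eq_sum_mat_unit[of d g] mat_sum_conj[OF U mat_adjoint_carrier[OF U] smult_carrier_mat[OF mat_unit_carrier]]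
  using U by (intro mat_sum_cong) (simp add: mult_smult_conj spectral_proj_def)

text \<open>The weights $s_{ij}$ of the proof sketch, for $U$ diagonalising $X$ and $W$ diagonalising
  $T(X)$.\<close>
definition transition_weight ::
    "nat \<Rightarrow> (complex mat \<Rightarrow> complex mat) \<Rightarrow> complex mat \<Rightarrow> complex mat \<Rightarrow> nat \<Rightarrow> nat \<Rightarrow> real" where
  "transition_weight d T U W i j = Re ((mat_adjoint W * T (spectral_proj d U i) * W) $$ (j, j))"

lemma Re_diag_image_unitary_conj_rdiag:
  assumes T: "linear_map_mat d T" and U: "U \<in> carrier_mat d d" and W: "W \<in> carrier_mat d d" and j: "j < d"
  shows "Re ((mat_adjoint W * T (U * rdiag d g * mat_adjoint U) * W) $$ (j, j))
    = (\<Sum>i<d. g i * transition_weight d T U W i j)"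
proof -
  have TP: "T (spectral_proj d U i) \<in> carrier_mat d d" for i
    using T U unfolding linear_map_mat_def by simp
  have "mat_adjoint W * T (U * rdiag d g * mat_adjoint U) * W
      = mat_sum d (\<lambda>i. complex_of_real (g i) \<cdot>\<^sub>m (mat_adjoint W * T (spectral_proj d U i) * W)) d"
    unfolding unitary_conj_rdiag_eq_sum[OF U] linear_map_mat_sum_smult[OF T spectral_proj_carrier[OF U]]
      mat_sum_conj[OF mat_adjoint_carrier[OF W] W smult_carrier_mat[OF TP]]
    using W TP by (intro mat_sum_cong mult_smult_conj) auto
  then show ?thesis
    using W TP j by (simp add: index_mat_sum transition_weight_def)
qed

lemma transition_weight_nonneg:
  assumes cp: "completely_positive d T" and T: "linear_map_mat d T"
    and U: "U \<in> carrier_mat d d" and W: "W \<in> carrier_mat d d" and j: "j < d"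
  shows "0 \<le> transition_weight d T U W i j"
proof -
  have psd: "psd_mat d (T (spectral_proj d U i))"
    by (rule completely_positive_imp_psd[OF cp T spectral_proj_psd[OF U]])
  then have TP: "T (spectral_proj d U i) \<in> carrier_mat d d"
    unfolding psd_mat_def hermitian_mat_def by simp
  have "col W j \<in> carrier_vec d" using W j by (simp add: carrier_vecI)
  then show ?thesis
    using psd unfolding transition_weight_def diag_entry_adjoint_conj[OF W TP j] psd_mat_def by blast
qed

lemma transition_weight_sum:
  assumes T: "linear_map_mat d T" and unital: "T (1\<^sub>m d) = 1\<^sub>m d"
    and U: "unitary_mat d U" and W: "unitary_mat d W" and j: "j < d"
  shows "(\<Sum>i<d. transition_weight d T U W i j) = 1"
proof -
  have "U * rdiag d (\<lambda>_. 1) * mat_adjoint U = 1\<^sub>m d"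
    using unitary_matD[OF U] by (simp add: mat_diag_def flip: one_mat_def)
  then show ?thesis
    using Re_diag_image_unitary_conj_rdiag[OF T unitary_matD(1)[OF U] unitary_matD(1)[OF W] j, of "\<lambda>_. 1"]
      unital unitary_matD[OF W] j by simp
qed

lemma eigenvalue_image_eq_sum:
  assumes T: "linear_map_mat d T" and U: "unitary_mat d U" and W: "unitary_mat d W" and j: "j < d"
    and TX: "T (U * rdiag d lam * mat_adjoint U) = W * rdiag d mu * mat_adjoint W"
  shows "mu j = (\<Sum>i<d. lam i * transition_weight d T U W i j)"
proof -
  have "Re ((mat_adjoint W * T (U * rdiag d lam * mat_adjoint U) * W) $$ (j, j)) = mu j"
    unfolding TX unitary_mat_conj_cancel(1)[OF W mat_diag_dim] using j by (simp add: mat_diag_def)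
  then show ?thesis
    using Re_diag_image_unitary_conj_rdiag[OF T unitary_matD(1)[OF U] unitary_matD(1)[OF W] j, of lam] by simp
qed


lemma eigenvalue_image_nonneg:
  assumes cp: "completely_positive d T" and T: "linear_map_mat d T"
    and U: "unitary_mat d U" and W: "unitary_mat d W" and j: "j < d"
    and lam: "\<And>i. i < d \<Longrightarrow> 0 \<le> lam i"
    and TX: "T (U * rdiag d lam * mat_adjoint U) = W * rdiag d mu * mat_adjoint W"
  shows "0 \<le> mu j"
  using eigenvalue_image_eq_sum[OF T U W j TX] lam
    transition_weight_nonneg[OF cp T unitary_matD(1)[OF U] unitary_matD(1)[OF W] j]
  by (auto intro!: sum_nonneg mult_nonneg_nonneg)

text \<open>Jensen's inequality for the convex function $x \mapsto x^p$ and the stochastic weights.\<close>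
lemma eigenvalue_image_powr_le:
  assumes cp: "completely_positive d T" and T: "linear_map_mat d T" and unital: "T (1\<^sub>m d) = 1\<^sub>m d"
    and U: "unitary_mat d U" and W: "unitary_mat d W" and j: "j < d"
    and lam: "\<And>i. i < d \<Longrightarrow> 0 < lam i" and p: "1 \<le> p"
    and TX: "T (U * rdiag d lam * mat_adjoint U) = W * rdiag d mu * mat_adjoint W"
  shows "mu j powr p \<le> Re ((mat_adjoint W * T (U * rdiag d (\<lambda>i. lam i powr p) * mat_adjoint U) * W) $$ (j, j))"
proof -
  note nonneg = transition_weight_nonneg[OF cp T unitary_matD(1)[OF U] unitary_matD(1)[OF W] j]
  have "(\<Sum>i<d. transition_weight d T U W i j *\<^sub>R lam i) powr p
      \<le> (\<Sum>i<d. transition_weight d T U W i j * lam i powr p)"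
    by (rule convex_on_sum[OF _ _ powr_convex[OF p]])
      (use j lam nonneg transition_weight_sum[OF T unital U W j] in auto)
  then show ?thesis
    unfolding eigenvalue_image_eq_sum[OF T U W j TX]
      Re_diag_image_unitary_conj_rdiag[OF T unitary_matD(1)[OF U] unitary_matD(1)[OF W] j]
    by (simp add: mult.commute)
qed

section \<open>The contraction estimate\<close>

lemma sum_eigenvalue_image_powr_le:
  assumes cp: "completely_positive d T" and T: "linear_map_mat d T" and unital: "T (1\<^sub>m d) = 1\<^sub>m d"
    and U: "unitary_mat d U" and W: "unitary_mat d W"
    and lam: "\<And>i. i < d \<Longrightarrow> 0 < lam i" and p: "1 \<le> p"
    and TX: "T (U * rdiag d lam * mat_adjoint U) = W * rdiag d mu * mat_adjoint W"
  defines "B \<equiv> T (U * rdiag d (\<lambda>i. lam i powr p) * mat_adjoint U)"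
  shows "(\<Sum>j<d. mu j powr (2 * p)) \<le> Re (mtrace (mat_adjoint B * B))"
proof -
  have Bc: "B \<in> carrier_mat d d" unfolding B_def using T unitary_matD(1)[OF U] unfolding linear_map_mat_def by simp
  define G where "G = mat_adjoint W * B * W"
  have "mu j powr (2 * p) \<le> (Re (G $$ (j, j)))\<^sup>2" if j: "j < d" for j
  proof -
    have le: "mu j powr p \<le> Re (G $$ (j, j))"
      unfolding G_def B_def by (rule eigenvalue_image_powr_le[OF cp T unital U W j lam p TX])
    have "mu j powr (2 * p) = (mu j powr p)\<^sup>2" by (simp only: power2_eq_square mult_2 powr_add)
    also have "\<dots> \<le> (Re (G $$ (j, j)))\<^sup>2" using le by (intro power_mono) auto
    finally show ?thesis .
  qed
  then have "(\<Sum>j<d. mu j powr (2 * p)) \<le> (\<Sum>j<d. (Re (G $$ (j, j)))\<^sup>2)" by (intro sum_mono) auto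
  also have "\<dots> \<le> Re (mtrace (mat_adjoint G * G))"
    by (rule sum_Re_diag_sq_le_mtrace) (use Bc unitary_matD(1)[OF W] in \<open>simp add: G_def\<close>)
  also have "mtrace (mat_adjoint G * G) = mtrace (mat_adjoint B * B)"
    unfolding G_def by (rule mtrace_adjoint_mult_unitary_conj[OF W Bc])
  finally show ?thesis .
qed

lemma dirichlet_hs_adjoint_comp_minus_id:
  assumes T: "linear_map_mat d T" and Y: "Y \<in> carrier_mat d d" and hY: "mat_adjoint Y = Y"
  shows "- dirichlet d (\<lambda>Y. hs_adjoint d T (T Y) - Y) Y
    = (Re (mtrace (mat_adjoint (T Y) * T Y)) - Re (mtrace (Y * Y))) / real d"
proof -
  have TY: "T Y \<in> carrier_mat d d" using T Y unfolding linear_map_mat_def by simp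
  define C where "C = hs_adjoint d T (T Y)"
  have C: "C \<in> carrier_mat d d" unfolding C_def by (rule hs_adjointD(1)[OF T TY])
  have "cnj (mtrace (C * Y)) = cnj (mtrace (mat_adjoint Y * C))"
    unfolding hY by (simp add: mtrace_mult_comm[OF C Y])
  also have "\<dots> = mtrace (mat_adjoint C * Y)"
    using C Y by (simp add: mtrace_adjoint[symmetric, of _ d] mat_adjoint_mult[of _ d d _ d])
  also have "\<dots> = mtrace (mat_adjoint (T Y) * T Y)"
    unfolding C_def by (rule hs_adjointD(2)[OF T TY Y])
  finally have "Re (mtrace (C * Y)) = Re (mtrace (mat_adjoint (T Y) * T Y))"
    by (metis cnj.simps(1))
  then show ?thesis
    unfolding dirichlet_def C_def[symmetric] using C Y
    by (simp add: minus_mult_distrib_mat[OF C Y Y] mtrace_minus[of _ d] diff_divide_distrib)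
qed

corollary dirichlet_unitary_conj_rdiag:
  fixes g :: "nat \<Rightarrow> real"
  assumes T: "linear_map_mat d T" and U: "unitary_mat d U"
  defines "Y \<equiv> U * rdiag d g * mat_adjoint U"
  shows "- dirichlet d (\<lambda>Y. hs_adjoint d T (T Y) - Y) Y
    = (Re (mtrace (mat_adjoint (T Y) * T Y)) - (\<Sum>i<d. g i * g i)) / real d"
proof -
  note Uc = unitary_matD(1)[OF U]
  have "Re (mtrace (Y * Y)) = (\<Sum>i<d. g i * g i)"
    unfolding Y_def unitary_conj_rdiag_mult[OF U] mtrace_unitary_conj_rdiag[OF U] by simp
  moreover have "Y \<in> carrier_mat d d" "mat_adjoint Y = Y"
    unfolding Y_def using Uc by (simp_all add: mat_adjoint_conj)
  ultimately show ?thesis using dirichlet_hs_adjoint_comp_minus_id[OF T] by simp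
qed

theorem mainTheorem14:
  fixes d :: nat and T :: "complex mat \<Rightarrow> complex mat" and X :: "complex mat" and q :: real
  assumes "0 < d"
    and "doubly_stochastic_channel d T"
    and "pd_mat d X"
    and "2 \<le> q"
  shows "wnorm d q (T X) powr q - wnorm d q X powr q
           \<le> - dirichlet d (\<lambda>Y. hs_adjoint d T (T Y) - Y) (mat_rpow d X (q / 2))"
proof -
  from assms(2) have T: "linear_map_mat d T" and cp: "completely_positive d T" and unital: "T (1\<^sub>m d) = 1\<^sub>m d"
    unfolding doubly_stochastic_channel_def by auto
  obtain U lam where U: "unitary_mat d U" and X: "X = U * rdiag d lam * mat_adjoint U"
    using hermitian_spectral_decomposition assms(3) unfolding pd_mat_def hermitian_mat_def by blast
  have lam: "0 < lam i" if "i < d" for i using pd_mat_unitary_conj_rdiag_pos assms(3) U that X by blast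
  have "psd_mat d (T X)"
    unfolding X by (intro completely_positive_imp_psd[OF cp T] psd_mat_conj_rdiag[OF unitary_matD(1)[OF U]])
      (use lam in force)
  then obtain W mu where W: "unitary_mat d W" and TX: "T X = W * rdiag d mu * mat_adjoint W"
    using hermitian_spectral_decomposition unfolding psd_mat_def hermitian_mat_def by blast
  have mu: "0 \<le> mu j" if "j < d" for j
    by (rule eigenvalue_image_nonneg[OF cp T U W that _ TX[unfolded X]]) (use lam in force)
  define Y where "Y = U * rdiag d (\<lambda>i. lam i powr (q / 2)) * mat_adjoint U"
  have "mat_rpow d X (q / 2) = Y" unfolding Y_def X mat_rpow_def by (rule mat_fun_unitary_conj_rdiag[OF U])
  then have "- dirichlet d (\<lambda>Y. hs_adjoint d T (T Y) - Y) (mat_rpow d X (q / 2))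
      = (Re (mtrace (mat_adjoint (T Y) * T Y)) - (\<Sum>i<d. lam i powr q)) / real d"
    using dirichlet_unitary_conj_rdiag[OF T U, of "\<lambda>i. lam i powr (q / 2)"] by (simp add: Y_def flip: powr_add)
  moreover have "(\<Sum>j<d. mu j powr q) \<le> Re (mtrace (mat_adjoint (T Y) * T Y))"
    using sum_eigenvalue_image_powr_le[OF cp T unital U W lam _ TX[unfolded X], of "q / 2"] assms(4)
    by (simp add: Y_def)
  moreover have "wnorm d q (T X) powr q = (\<Sum>j<d. mu j powr q) / real d"
    unfolding TX using wnorm_powr_unitary_conj_rdiag[OF assms(1) W mu] assms(4) by simp
  moreover have "wnorm d q X powr q = (\<Sum>i<d. lam i powr q) / real d"
    unfolding X using wnorm_powr_unitary_conj_rdiag[OF assms(1) U] lam[THEN less_imp_le] assms(4) by simp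
  ultimately show ?thesis
    using assms(1) by (simp add: divide_right_mono diff_divide_distrib[symmetric])
qed

end
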